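(* Assume the setting of the context, with $\Delta x\sim h$. Then for all $\Delta=(h,\Delta x)$ sufficiently small, the solution $V^\Delta=(V^\Delta_{i,j})$ of the scheme, i.e. the bounded solution of $\mathcal{F}^\Delta_j(x_i,(V^\Delta_{i,j},V^\Delta_{i,\bar\jmath}),V^\Delta_{\cdot,j})=0$ for all $i\in\mathbb{N}$, $j=1,2$, is nondecreasing in $i$ for each $j$.
   Context: Constants: $\rho>0$, $r<\rho$, $0<y_1<y_2$, $\gamma>1$, $\underline{x}\le0$ with $\rho\underline{x}+y_j>0$, $\lambda_1,\lambda_2\ge0$; $\bar\jmath=3-j$; $u(c)=\frac{c^{1-\gamma}}{1-\gamma}$ for $c>0$, $u(0)=-\infty$. Discretization $\Delta=(h,\Delta x)$, $h,\Delta x>0$, $\rho h<1$, $\lambda_jh<1$; "$\Delta x\sim h$" means $h/\Delta x$ stays between two fixed positive constants as $\Delta\to0$. Grid $x_i=\underline{x}+i\Delta x$, $i\in\mathbb{N}=\{0,1,\dots\}$. $\beta_k(x)=\max\{0,1-|x-x_k|/\Delta x\}$ for $x\ge\underline{x}$. $\mathcal{C}^\Delta_j(x_i)=\{c\ge0:x_i+h(rx_i+y_j-c)\ge\underline{x}\}$, $s_{i,j}(c)=rx_i+y_j-c$. Scheme: $$\mathcal{F}^\Delta_j(x_i,(\mathsf{q}_j,\mathsf{q}_{\bar\jmath}),\mathsf{U})=\rho\mathsf{q}_j-(1-\rho h)\lambda_j(\mathsf{q}_{\bar\jmath}-\mathsf{q}_j)-\sup_{c\in\mathcal{C}^\Delta_j(x_i)}\Big\{u(c)+\frac{(1-\rho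 h)(1-\lambda_jh)}{h}\Big(\sum_k\beta_k(x_i+hs_{i,j}(c))\mathsf{U}_k-\mathsf{q}_j\Big)\Big\}.$$ This scheme has a unique bounded solution. *)

theory Defs
  imports "HOL-Analysis.Analysis" "HOL-Library.Extended_Real"
begin

definition util :: "real \<Rightarrow> real \<Rightarrow> ereal" where
  "util \<gamma> c = (if c > 0 then ereal (c powr (1 - \<gamma>) / (1 - \<gamma>)) else -\<infinity>)"

definition grid :: "real \<Rightarrow> real \<Rightarrow> nat \<Rightarrow> real" where
  "grid xl dx i = xl + real i * dx"

definition hat :: "real \<Rightarrow> real \<Rightarrow> nat \<Rightarrow> real \<Rightarrow> real" where
  "hat xl dx k z = max 0 (1 - \<bar>z - grid xl dx k\<bar> / dx)"

text \<open>Linear interpolation sum_k beta_k(z) U_k (only finitely many nonzero terms).\<close>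
definition interp :: "real \<Rightarrow> real \<Rightarrow> (nat \<Rightarrow> real) \<Rightarrow> real \<Rightarrow> real" where
  "interp xl dx U z = (\<Sum>k. hat xl dx k z * U k)"

definition consSet :: "real \<Rightarrow> real \<Rightarrow> real \<Rightarrow> real \<Rightarrow> real \<Rightarrow> nat \<Rightarrow> real set" where
  "consSet r xl h dx yj i =
     {c. c \<ge> 0 \<and> grid xl dx i + h * (r * grid xl dx i + yj - c) \<ge> xl}"

definition schemeF ::
  "real \<Rightarrow> real \<Rightarrow> real \<Rightarrow> real \<Rightarrow> real \<Rightarrow> real \<Rightarrow> real \<Rightarrow> real
   \<Rightarrow> nat \<Rightarrow> real \<Rightarrow> real \<Rightarrow> (nat \<Rightarrow> real) \<Rightarrow> ereal" where
  "schemeF \<rho> r \<gamma> xl lj yj h dx i qj qjb U =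
     ereal (\<rho> * qj - (1 - \<rho> * h) * lj * (qjb - qj))
     - (SUP c \<in> consSet r xl h dx yj i.
          util \<gamma> c + ereal ((1 - \<rho> * h) * (1 - lj * h) / h *
             (interp xl dx U (grid xl dx i + h * (r * grid xl dx i + yj - c)) - qj)))"

end

theory Submission imports Defs begin

text \<open>Let \<open>d\<close> be the supremum of \<open>V\<^sub>k\<^sub>,\<^sub>j - V\<^sub>k\<^sub>',\<^sub>j\<close> over \<open>k \<le> k'\<close> and \<open>j = 1, 2\<close>;
  it is finite because \<open>V\<close> is bounded. Once \<open>1 + r h \<ge> 0\<close>, the map \<open>x \<mapsto> x + h (r x + y\<^sub>j - c)\<close>
  is nondecreasing, so every consumption admissible at \<open>x\<^sub>k\<close> is admissible at \<open>x\<^sub>k\<^sub>'\<close> and leads to a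
  larger point, where the interpolant of \<open>V\<^sub>\<cdot>\<^sub>,\<^sub>j\<close> is smaller by at most \<open>d\<close>. Comparing the two
  scheme equations gives \<open>V\<^sub>k\<^sub>,\<^sub>j - V\<^sub>k\<^sub>',\<^sub>j \<le> (1 - \<rho> h) d\<close>, hence \<open>d \<le> (1 - \<rho> h) d\<close> and \<open>d \<le> 0\<close>.\<close>

lemma hat_eq_normalized:
  assumes "dx > 0"
  shows "hat xl dx m z = max 0 (1 - \<bar>(z - xl) / dx - real m\<bar>)"
proof -
  have "\<bar>z - grid xl dx m\<bar> / dx = \<bar>(z - grid xl dx m) / dx\<bar>" using assms by simp
  also have "(z - grid xl dx m) / dx = (z - xl) / dx - real m" using assms
    by (simp add: grid_def field_simps)
  finally show ?thesis by (simp add: hat_def)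
qed

lemma interp_on_cell:
  assumes dx: "dx > 0" and z: "z \<ge> xl"
  defines "k \<equiv> nat \<lfloor>(z - xl) / dx\<rfloor>"
  defines "t \<equiv> (z - xl) / dx - real k"
  shows "interp xl dx U z = (1 - t) * U k + t * U (Suc k)" and "0 \<le> t" and "t < 1"
proof -
  define w where "w = (z - xl) / dx"
  have "w \<ge> 0" using dx z by (simp add: w_def)
  then have kw: "real k \<le> w" "w < real k + 1"
    by (simp_all add: k_def w_def[symmetric])
  then show "0 \<le> t" "t < 1" by (simp_all add: t_def w_def[symmetric])
  have hat_w: "hat xl dx m z = max 0 (1 - \<bar>w - real m\<bar>)" for m
    using hat_eq_normalized[OF dx] by (simp add: w_def)
  have "hat xl dx m z * U m = 0" if "m \<notin> {k, Suc k}" for m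
  proof -
    from that have "real m + 1 \<le> real k \<or> real m \<ge> real k + 2" by auto
    then have "\<bar>w - real m\<bar> \<ge> 1" using kw by auto
    then show ?thesis by (simp add: hat_w)
  qed
  then have "interp xl dx U z = (\<Sum>m\<in>{k, Suc k}. hat xl dx m z * U m)"
    unfolding interp_def by (intro suminf_finite) auto
  also have "\<dots> = hat xl dx k z * U k + hat xl dx (Suc k) z * U (Suc k)" by simp
  also have "hat xl dx k z = 1 - t" using kw by (simp add: hat_w t_def w_def[symmetric])
  also have "hat xl dx (Suc k) z = t" using kw by (simp add: hat_w t_def w_def[symmetric])
  finally show "interp xl dx U z = (1 - t) * U k + t * U (Suc k)" .
qed

lemma convex_comb_bounds:
  fixes a b t :: real
  assumes "0 \<le> t" "t \<le> 1"
  shows "min a b \<le> (1 - t) * a + t * b" and "(1 - t) * a + t * b \<le> max a b"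
proof -
  have "(1 - t) * min a b \<le> (1 - t) * a" "t * min a b \<le> t * b"
    "(1 - t) * a \<le> (1 - t) * max a b" "t * b \<le> t * max a b"
    using assms by (simp_all add: mult_left_mono)
  then show "min a b \<le> (1 - t) * a + t * b" "(1 - t) * a + t * b \<le> max a b"
    by (simp_all add: algebra_simps)
qed

lemma interp_diff_le:
  assumes dx: "dx > 0" and z: "xl \<le> z" "z \<le> z'"
    and U: "\<And>k k'. k \<le> k' \<Longrightarrow> U k - U k' \<le> \<delta>"
  shows "interp xl dx U z - interp xl dx U z' \<le> \<delta>"
proof -
  define k where "k = nat \<lfloor>(z - xl) / dx\<rfloor>"
  define t where "t = (z - xl) / dx - real k"
  define m where "m = nat \<lfloor>(z' - xl) / dx\<rfloor>"
  define s where "s = (z' - xl) / dx - real m"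
  note Iz = interp_on_cell[OF dx z(1), folded k_def, folded t_def]
  note Iz' = interp_on_cell[OF dx order_trans[OF z], folded m_def, folded s_def]
  have "\<delta> \<ge> 0" using U[of 0 0] by simp
  have w_le: "(z - xl) / dx \<le> (z' - xl) / dx" using dx z by (simp add: divide_right_mono)
  then have "k \<le> m" unfolding k_def m_def by (intro nat_mono floor_mono)
  show ?thesis
  proof (cases "k = m")
    case True
    then have "t \<le> s" using w_le by (simp add: t_def s_def)
    have "interp xl dx U z - interp xl dx U z' = (s - t) * (U k - U (Suc k))"
      using Iz(1)[of U] Iz'(1)[of U] True by (simp add: algebra_simps)
    also have "\<dots> \<le> (s - t) * \<delta>" using U[of k "Suc k"] \<open>t \<le> s\<close> by (intro mult_left_mono) auto
    also have "\<dots> \<le> \<delta>" using Iz Iz' \<open>\<delta> \<ge> 0\<close> \<open>t \<le> s\<close> by (intro mult_left_le_one_le) auto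
    finally show ?thesis .
  next
    case False
    then have "Suc k \<le> m" using \<open>k \<le> m\<close> by simp
    then have "max (U k) (U (Suc k)) - min (U m) (U (Suc m)) \<le> \<delta>"
      using U[of k m] U[of k "Suc m"] U[of "Suc k" m] U[of "Suc k" "Suc m"]
      by (simp add: max_def min_def)
    moreover have "interp xl dx U z \<le> max (U k) (U (Suc k))"
      using Iz convex_comb_bounds(2)[of t] by simp
    moreover have "min (U m) (U (Suc m)) \<le> interp xl dx U z'"
      using Iz' convex_comb_bounds(1)[of s] by simp
    ultimately show ?thesis by linarith
  qed
qed

lemma grid_mono:
  assumes "dx > 0" "i \<le> i'"
  shows "grid xl dx i \<le> grid xl dx i'"
  using assms by (simp add: grid_def mult_right_mono)

lemma ereal_diff_eq_0_imp_eq: "ereal a - x = 0 \<Longrightarrow> x = ereal a"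
  by (cases x) auto

lemma schemeF_eq_0_imp_SUP_eq:
  assumes "schemeF \<rho> r \<gamma> xl lj yj h dx i qj qjb U = 0"
  shows "(SUP c \<in> consSet r xl h dx yj i.
            util \<gamma> c + ereal ((1 - \<rho> * h) * (1 - lj * h) / h *
              (interp xl dx U (grid xl dx i + h * (r * grid xl dx i + yj - c)) - qj)))
         = ereal (\<rho> * qj - (1 - \<rho> * h) * lj * (qjb - qj))"
  using ereal_diff_eq_0_imp_eq[OF assms[unfolded schemeF_def]] by simp

lemma scheme_solution_diff_le:
  fixes q qb :: "nat \<Rightarrow> real"
  assumes h: "h > 0" and dx: "dx > 0" and rh: "\<rho> * h < 1" and lj: "lj \<ge> 0" "lj * h < 1"
    and r: "1 + r * h \<ge> 0" and "i \<le> i'"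
    and Fi: "schemeF \<rho> r \<gamma> xl lj yj h dx i (q i) (qb i) q = 0"
    and Fi': "schemeF \<rho> r \<gamma> xl lj yj h dx i' (q i') (qb i') q = 0"
    and dq: "\<And>k k'. k \<le> k' \<Longrightarrow> q k - q k' \<le> \<delta>"
    and dqb: "qb i - qb i' \<le> \<delta>"
  shows "q i - q i' \<le> (1 - \<rho> * h) * \<delta>"
proof -
  define K where "K = (1 - \<rho> * h) * (1 - lj * h) / h"
  define A where "A n = \<rho> * q n - (1 - \<rho> * h) * lj * (qb n - q n)" for n
  define z where "z n c = grid xl dx n + h * (r * grid xl dx n + yj - c)" for n c
  define f where "f n c = util \<gamma> c + ereal (K * (interp xl dx q (z n c) - q n))" for n c
  have "K \<ge> 0" using h rh lj unfolding K_def by simp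
  have SUP_f: "(SUP c \<in> consSet r xl h dx yj n. f n c) = ereal (A n)"
    if "schemeF \<rho> r \<gamma> xl lj yj h dx n (q n) (qb n) q = 0" for n
    using schemeF_eq_0_imp_SUP_eq[OF that] by (simp add: A_def f_def z_def K_def)
  have z_mono: "z i c \<le> z i' c" for c
  proof -
    have "z i' c - z i c = (1 + r * h) * (grid xl dx i' - grid xl dx i)"
      by (simp add: z_def algebra_simps)
    also have "\<dots> \<ge> 0" using r grid_mono[OF dx \<open>i \<le> i'\<close>] by simp
    finally show ?thesis by simp
  qed
  have "(SUP c \<in> consSet r xl h dx yj i. f i c) \<le> ereal (A i' + K * (\<delta> + q i' - q i))"
  proof (rule SUP_least)
    fix c assume "c \<in> consSet r xl h dx yj i"
    then have zi: "xl \<le> z i c" by (simp add: consSet_def z_def)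
    then have c': "c \<in> consSet r xl h dx yj i'"
      using \<open>c \<in> consSet r xl h dx yj i\<close> z_mono[of c] by (simp add: consSet_def z_def)
    have "K * (interp xl dx q (z i c) - interp xl dx q (z i' c)) \<le> K * \<delta>"
      using interp_diff_le[OF dx zi z_mono dq] \<open>K \<ge> 0\<close> by (intro mult_left_mono) auto
    then have "K * (interp xl dx q (z i c) - q i)
        \<le> K * (interp xl dx q (z i' c) - q i') + K * (\<delta> + q i' - q i)"
      by (simp add: algebra_simps)
    then have "f i c \<le> util \<gamma> c + ereal (K * (interp xl dx q (z i' c) - q i') + K * (\<delta> + q i' - q i))"
      unfolding f_def by (intro add_left_mono) simp
    also have "\<dots> = f i' c + ereal (K * (\<delta> + q i' - q i))"
      by (simp add: f_def add.assoc)
    also have "\<dots> \<le> ereal (A i') + ereal (K * (\<delta> + q i' - q i))"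
      using SUP_f[OF Fi'] c' by (intro add_right_mono) (metis SUP_upper)
    finally show "f i c \<le> ereal (A i' + K * (\<delta> + q i' - q i))" by simp
  qed
  then have "A i \<le> A i' + K * (\<delta> + q i' - q i)" using SUP_f[OF Fi] by simp
  then have "(q i - q i') * (\<rho> + (1 - \<rho> * h) * lj + K)
      \<le> (1 - \<rho> * h) * lj * (qb i - qb i') + K * \<delta>"
    unfolding A_def by (simp add: algebra_simps)
  also have "\<dots> \<le> (1 - \<rho> * h) * lj * \<delta> + K * \<delta>"
    using dqb lj rh by (intro add_right_mono mult_left_mono) auto
  also have "\<rho> + (1 - \<rho> * h) * lj + K = 1 / h"
    using h unfolding K_def by (simp add: field_simps)
  finally have "q i - q i' \<le> h * ((1 - \<rho> * h) * lj * \<delta> + K * \<delta>)"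
    using h by (simp add: field_simps)
  also have "\<dots> = (1 - \<rho> * h) * \<delta>" using h unfolding K_def by (simp add: field_simps)
  finally show ?thesis .
qed

lemma one_plus_mult_nonneg:
  fixes r h :: real
  assumes "0 < h" "h < 1 / (\<bar>r\<bar> + 1)"
  shows "0 \<le> 1 + r * h"
proof -
  have "- (r * h) \<le> \<bar>r\<bar> * h" using assms abs_ge_minus_self[of "r * h"] by (simp add: abs_mult)
  moreover have "\<bar>r\<bar> * h < 1" using assms by (simp add: field_simps)
  ultimately show ?thesis by linarith
qed

lemma mono_if_decrease_contracts:
  fixes V :: "nat \<Rightarrow> 'a \<Rightarrow> real"
  assumes bounded: "\<And>i j. j \<in> J \<Longrightarrow> \<bar>V i j\<bar> \<le> B" and "J \<noteq> {}" "\<theta> < 1"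
    and contracts: "\<And>\<delta> k k' j. (\<And>k k' j. k \<le> k' \<Longrightarrow> j \<in> J \<Longrightarrow> V k j - V k' j \<le> \<delta>) \<Longrightarrow>
      k \<le> k' \<Longrightarrow> j \<in> J \<Longrightarrow> V k j - V k' j \<le> \<theta> * \<delta>"
  shows "\<forall>j\<in>J. mono (\<lambda>i. V i j)"
proof -
  define S where "S = {V k j - V k' j | k k' j. k \<le> k' \<and> j \<in> J}"
  have "S \<noteq> {}" using \<open>J \<noteq> {}\<close> unfolding S_def by blast
  have "bdd_above S"
  proof (rule bdd_aboveI)
    fix x assume "x \<in> S"
    then obtain k k' j where "x = V k j - V k' j" "j \<in> J" unfolding S_def by blast
    then show "x \<le> 2 * B" using bounded[of j k] bounded[of j k'] by linarith
  qed
  then have le_Sup: "V k j - V k' j \<le> Sup S" if "k \<le> k'" "j \<in> J" for k k' j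
    using that unfolding S_def by (intro cSup_upper) blast+
  have "Sup S \<le> \<theta> * Sup S"
    using \<open>S \<noteq> {}\<close> contracts[OF le_Sup] unfolding S_def by (intro cSup_least) auto
  then have "(1 - \<theta>) * Sup S \<le> 0" by (simp add: algebra_simps)
  then have "Sup S \<le> 0" using \<open>\<theta> < 1\<close> by (simp add: mult_le_0_iff)
  then show ?thesis using le_Sup by (smt (verit) monoI)
qed

theorem mainTheorem15:
  fixes \<rho> r \<gamma> xl :: real and y lam :: "nat \<Rightarrow> real" and c1 c2 :: real
  assumes "\<rho> > 0" and "r < \<rho>" and "0 < y 1" and "y 1 < y 2" and "\<gamma> > 1"
    and "xl \<le> 0" and "\<rho> * xl + y 1 > 0" and "\<rho> * xl + y 2 > 0"
    and "lam 1 \<ge> 0" and "lam 2 \<ge> 0"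
    and "0 < c1" and "c1 \<le> c2"
  shows "\<exists>\<delta> > 0. \<forall>h dx (V :: nat \<Rightarrow> nat \<Rightarrow> real).
           0 < h \<and> h < \<delta> \<and> 0 < dx \<and> dx < \<delta> \<and> c1 \<le> h / dx \<and> h / dx \<le> c2
           \<and> \<rho> * h < 1 \<and> lam 1 * h < 1 \<and> lam 2 * h < 1
           \<and> (\<exists>B. \<forall>i. \<forall>j\<in>{1,2}. \<bar>V i j\<bar> \<le> B)
           \<and> (\<forall>i. \<forall>j\<in>{1,2}.
                schemeF \<rho> r \<gamma> xl (lam j) (y j) h dx i (V i j) (V i (3 - j)) (\<lambda>k. V k j) = 0)
           \<longrightarrow> (\<forall>j\<in>{1,2}. mono (\<lambda>i. V i j))"
proof (intro exI[of _ "1 / (\<bar>r\<bar> + 1)"] conjI allI impI)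
  \<comment> \<open>The smallness of \<open>\<Delta>\<close> is only needed for \<open>1 + r h \<ge> 0\<close>.\<close>
  show "0 < 1 / (\<bar>r\<bar> + 1)" by simp
  fix h dx and V :: "nat \<Rightarrow> nat \<Rightarrow> real"
  assume H: "0 < h \<and> h < 1 / (\<bar>r\<bar> + 1) \<and> 0 < dx \<and> dx < 1 / (\<bar>r\<bar> + 1) \<and> c1 \<le> h / dx
           \<and> h / dx \<le> c2 \<and> \<rho> * h < 1 \<and> lam 1 * h < 1 \<and> lam 2 * h < 1
           \<and> (\<exists>B. \<forall>i. \<forall>j\<in>{1,2}. \<bar>V i j\<bar> \<le> B)
           \<and> (\<forall>i. \<forall>j\<in>{1,2}.
                schemeF \<rho> r \<gamma> xl (lam j) (y j) h dx i (V i j) (V i (3 - j)) (\<lambda>k. V k j) = 0)"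
  then have h: "0 < h" and dx: "0 < dx" and rh: "\<rho> * h < 1" and h_r: "h < 1 / (\<bar>r\<bar> + 1)"
    and lam: "\<And>j. j \<in> {1,2} \<Longrightarrow> lam j * h < 1"
    and F: "\<And>i j. j \<in> {1,2} \<Longrightarrow>
      schemeF \<rho> r \<gamma> xl (lam j) (y j) h dx i (V i j) (V i (3 - j)) (\<lambda>k. V k j) = 0"
    by auto
  from H obtain B where B: "\<And>i j. j \<in> {1,2} \<Longrightarrow> \<bar>V i j\<bar> \<le> B" by auto
  have r: "1 + r * h \<ge> 0" using one_plus_mult_nonneg[OF h h_r] .
  show "\<forall>j\<in>{1,2}. mono (\<lambda>i. V i j)"
  proof (rule mono_if_decrease_contracts[OF B])
    show "{1, 2} \<noteq> {}" "1 - \<rho> * h < 1" using h \<open>\<rho> > 0\<close> by auto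
    fix \<delta> and k k' j :: nat
    assume dV: "\<And>k k' j. k \<le> k' \<Longrightarrow> j \<in> {1,2} \<Longrightarrow> V k j - V k' j \<le> \<delta>"
      and "k \<le> k'" and j: "j \<in> {1,2}"
    moreover have "3 - j \<in> {1,2}" "0 \<le> lam j" using j \<open>lam 1 \<ge> 0\<close> \<open>lam 2 \<ge> 0\<close> by auto
    ultimately show "V k j - V k' j \<le> (1 - \<rho> * h) * \<delta>"
      using scheme_solution_diff_le[where q="\<lambda>k. V k j" and qb="\<lambda>k. V k (3 - j)",
          OF h dx rh _ lam[OF j] r \<open>k \<le> k'\<close> F[OF j] F[OF j] dV[OF _ j] dV] by blast
  qed
qed

end
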